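(* Let $\otimes$ and $\oplus$ be uninorms on $[0,1]$. Then $(\otimes,\oplus)$ satisfies the rearrangement inequality if and only if for all $0\leq x_1\leq x_2\leq 1$ and $0\leq y_1\leq y_2\leq 1$, $$(x_1\otimes y_1)\oplus (x_2\otimes y_2) \geq (x_1\otimes y_2)\oplus (x_2\otimes y_1).$$ Moreover, $(\otimes,\oplus)$ satisfies the dual rearrangement inequality if and only if for all $0\leq x_1\leq x_2\leq 1$ and $0\leq y_1\leq y_2\leq 1$, $$(x_1\oplus y_1)\otimes (x_2\oplus y_2) \leq (x_1\oplus y_2)\otimes (x_2\oplus y_1).$$
   Context: A uninorm is a function $\otimes:[0,1]^2\to[0,1]$ that is commutative, associative, monotonic (for all $x,y,z\in[0,1]$, $x\leq y$ implies $x\otimes z\leq y\otimes z$), and has an identity element $e\in[0,1]$ (i.e. $x\otimes e=x$ for all $x\in[0,1]$). For uninorms $\otimes,\oplus$, the pair $(\otimes,\oplus)$ satisfies the rearrangement inequality if for every $n\geq 1$, all $0\leq x_1\leq\cdots\leq x_n\leq 1$, $0\leq y_1\leq\cdots\leq y_n\leq 1$ and every permutation $\sigma$ of $\{1,\dots,n\}$, $$(x_n\otimes y_1)\oplus\cdots\oplus(x_1\otimes y_n)\leq (x_{\sigma(1)}\otimes y_1)\oplus\cdots\oplus(x_{\sigma(n)}\otimes y_n)\leq (x_1\otimes y_1)\oplus\cdots\oplus(x_n\otimes y_n).$$ It satisfies the dual rearrangement inequality if for all such $n$, $x_i$, $y_i$, $\sigma$, $$(x_n\oplus y_1)\otimes\cdots\otimes(x_1\oplus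 y_n)\geq (x_{\sigma(1)}\oplus y_1)\otimes\cdots\otimes(x_{\sigma(n)}\oplus y_n)\geq (x_1\oplus y_1)\otimes\cdots\otimes(x_n\oplus y_n).$$ (Iterated operations are well defined by associativity; the term $x_n\otimes y_1,\dots,x_1\otimes y_n$ means $x_{n+1-i}\otimes y_i$.) *)

theory Defs
  imports Complex_Main "HOL-Combinatorics.Permutations"
begin

text \<open>A uninorm on [0,1], represented as a real binary function whose behaviour
  on [0,1]^2 is what matters.\<close>
definition uninorm :: "(real \<Rightarrow> real \<Rightarrow> real) \<Rightarrow> bool" where
  "uninorm U \<longleftrightarrow>
     (\<forall>x\<in>{0..1}. \<forall>y\<in>{0..1}. U x y \<in> {0..1}) \<and>
     (\<forall>x\<in>{0..1}. \<forall>y\<in>{0..1}. U x y = U y x) \<and>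
     (\<forall>x\<in>{0..1}. \<forall>y\<in>{0..1}. \<forall>z\<in>{0..1}. U (U x y) z = U x (U y z)) \<and>
     (\<forall>x\<in>{0..1}. \<forall>y\<in>{0..1}. \<forall>z\<in>{0..1}. x \<le> y \<longrightarrow> U x z \<le> U y z) \<and>
     (\<exists>e\<in>{0..1}. \<forall>x\<in>{0..1}. U x e = x)"

definition iter_op :: "(real \<Rightarrow> real \<Rightarrow> real) \<Rightarrow> (nat \<Rightarrow> real) \<Rightarrow> nat \<Rightarrow> real" where
  "iter_op U a n = foldl (\<lambda>acc i. U acc (a i)) (a 1) [2..<Suc n]"

definition rearrangement_ineq ::
  "(real \<Rightarrow> real \<Rightarrow> real) \<Rightarrow> (real \<Rightarrow> real \<Rightarrow> real) \<Rightarrow> bool" where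
  "rearrangement_ineq T S \<longleftrightarrow>
    (\<forall>n::nat. \<forall>x y :: nat \<Rightarrow> real. \<forall>\<sigma>.
       n \<ge> 1 \<longrightarrow>
       (\<forall>i\<in>{1..n}. 0 \<le> x i \<and> x i \<le> 1 \<and> 0 \<le> y i \<and> y i \<le> 1) \<longrightarrow>
       (\<forall>i\<in>{1..n}. \<forall>j\<in>{1..n}. i \<le> j \<longrightarrow> x i \<le> x j \<and> y i \<le> y j) \<longrightarrow>
       \<sigma> permutes {1..n} \<longrightarrow>
       iter_op S (\<lambda>i. T (x (n + 1 - i)) (y i)) n
         \<le> iter_op S (\<lambda>i. T (x (\<sigma> i)) (y i)) n \<and>
       iter_op S (\<lambda>i. T (x (\<sigma> i)) (y i)) n
         \<le> iter_op S (\<lambda>i. T (x i) (y i)) n)"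

definition dual_rearrangement_ineq ::
  "(real \<Rightarrow> real \<Rightarrow> real) \<Rightarrow> (real \<Rightarrow> real \<Rightarrow> real) \<Rightarrow> bool" where
  "dual_rearrangement_ineq T S \<longleftrightarrow>
    (\<forall>n::nat. \<forall>x y :: nat \<Rightarrow> real. \<forall>\<sigma>.
       n \<ge> 1 \<longrightarrow>
       (\<forall>i\<in>{1..n}. 0 \<le> x i \<and> x i \<le> 1 \<and> 0 \<le> y i \<and> y i \<le> 1) \<longrightarrow>
       (\<forall>i\<in>{1..n}. \<forall>j\<in>{1..n}. i \<le> j \<longrightarrow> x i \<le> x j \<and> y i \<le> y j) \<longrightarrow>
       \<sigma> permutes {1..n} \<longrightarrow>
       iter_op T (\<lambda>i. S (x (n + 1 - i)) (y i)) n
         \<ge> iter_op T (\<lambda>i. S (x (\<sigma> i)) (y i)) n \<and>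
       iter_op T (\<lambda>i. S (x (\<sigma> i)) (y i)) n
         \<ge> iter_op T (\<lambda>i. S (x i) (y i)) n)"

end

theory Submission
  imports Defs "HOL-Library.Multiset"
begin

text \<open>A uninorm is a commutative monoid on \<open>[0,1]\<close>, so an iterated uninorm is a fold over
  the multiset of its arguments. The two-term inequality says exactly that the matrix
  \<open>c k i = x\<^sub>k \<otimes> y\<^sub>i\<close> is a Monge array with respect to \<open>\<oplus>\<close>. For a Monge array,
  moving the correct entry into the last position by one transposition changes the total in
  the right direction, so by induction on \<open>n\<close> the diagonal arrangement dominates every
  permutation. The anti-sorted arrangement is the diagonal arrangement of the reversed
  sequence \<open>x\<close>, whose matrix is Monge for the converse order. Necessity is the case
  \<open>n = 2\<close>, and the dual statement is the same argument for the order \<open>\<ge>\<close> with the two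
  uninorms exchanged.\<close>

lemma uninorm_closed:
  "uninorm U \<Longrightarrow> a \<in> {0..1} \<Longrightarrow> b \<in> {0..1} \<Longrightarrow> U a b \<in> {0..1}"
  unfolding uninorm_def by blast

lemma uninorm_commute:
  "uninorm U \<Longrightarrow> a \<in> {0..1} \<Longrightarrow> b \<in> {0..1} \<Longrightarrow> U a b = U b a"
  unfolding uninorm_def by blast

lemma uninorm_assoc:
  "uninorm U \<Longrightarrow> a \<in> {0..1} \<Longrightarrow> b \<in> {0..1} \<Longrightarrow> c \<in> {0..1} \<Longrightarrow> U (U a b) c = U a (U b c)"
  unfolding uninorm_def by blast

lemma uninorm_mono:
  "uninorm U \<Longrightarrow> a \<in> {0..1} \<Longrightarrow> b \<in> {0..1} \<Longrightarrow> c \<in> {0..1} \<Longrightarrow> a \<le> b \<Longrightarrow> U a c \<le> U b c"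
  unfolding uninorm_def by blast

lemma uninorm_identity:
  assumes "uninorm U"
  obtains e where "e \<in> {0..1}" "\<And>a. a \<in> {0..1} \<Longrightarrow> U a e = a"
  using assms unfolding uninorm_def by blast

definition clamp :: "real \<Rightarrow> real" where
  "clamp t = max 0 (min 1 t)"

text \<open>Clamping the arguments makes a uninorm commutative and associative on all of \<open>real\<close>,
  which is what \<open>fold_mset\<close> requires; on \<open>[0,1]\<close> nothing changes.\<close>
definition clamped :: "(real \<Rightarrow> real \<Rightarrow> real) \<Rightarrow> real \<Rightarrow> real \<Rightarrow> real" where
  "clamped U a b = U (clamp a) (clamp b)"

lemma clamp_in_unit: "clamp t \<in> {0..1}"
  by (simp add: clamp_def)

lemma clamp_unit [simp]: "t \<in> {0..1} \<Longrightarrow> clamp t = t"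
  by (simp add: clamp_def)

lemma clamped_unit [simp]: "a \<in> {0..1} \<Longrightarrow> b \<in> {0..1} \<Longrightarrow> clamped U a b = U a b"
  by (simp add: clamped_def del: atLeastAtMost_iff)

lemma clamped_closed: "uninorm U \<Longrightarrow> clamped U a b \<in> {0..1}"
  unfolding clamped_def by (rule uninorm_closed) (auto intro: clamp_in_unit simp del: atLeastAtMost_iff)

lemma clamped_commute: "uninorm U \<Longrightarrow> clamped U a b = clamped U b a"
  unfolding clamped_def using uninorm_commute clamp_in_unit by blast

lemma clamped_assoc:
  assumes "uninorm U"
  shows "clamped U (clamped U a b) c = clamped U a (clamped U b c)"
  using uninorm_assoc[OF assms clamp_in_unit clamp_in_unit clamp_in_unit, of a b c]
    clamped_closed[OF assms]
  by (simp add: clamped_def del: atLeastAtMost_iff)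

lemma comp_fun_commute_clamped: "uninorm U \<Longrightarrow> comp_fun_commute (clamped U)"
  by unfold_locales (simp add: fun_eq_iff, metis clamped_assoc clamped_commute)

definition uninorm_fold :: "(real \<Rightarrow> real \<Rightarrow> real) \<Rightarrow> real \<Rightarrow> ('a \<Rightarrow> real) \<Rightarrow> 'a set \<Rightarrow> real" where
  "uninorm_fold U e f A = fold_mset (clamped U) e (image_mset f (mset_set A))"

lemma uninorm_fold_empty [simp]: "uninorm_fold U e f {} = e"
  by (simp add: uninorm_fold_def)

lemma uninorm_fold_insert:
  assumes "uninorm U" "finite A" "a \<notin> A"
  shows "uninorm_fold U e f (insert a A) = clamped U (f a) (uninorm_fold U e f A)"
  using assms comp_fun_commute.fold_mset_add_mset[OF comp_fun_commute_clamped[OF assms(1)]]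
  by (simp add: uninorm_fold_def)

lemma uninorm_fold_closed:
  assumes "uninorm U" "e \<in> {0..1}"
  shows "uninorm_fold U e f A \<in> {0..1}"
proof (cases "finite A \<and> A \<noteq> {}")
  case True
  then obtain a where "a \<in> A" by blast
  with True show ?thesis
    using uninorm_fold_insert[OF assms(1), of "A - {a}" a e f] clamped_closed[OF assms(1)]
    by (simp add: insert_absorb)
qed (use assms(2) in \<open>auto simp: uninorm_fold_def\<close>)

lemma uninorm_fold_cong:
  "(\<And>a. a \<in> A \<Longrightarrow> f a = g a) \<Longrightarrow> uninorm_fold U e f A = uninorm_fold U e g A"
  unfolding uninorm_fold_def
  by (cases "finite A") (auto intro!: arg_cong[where f = "fold_mset _ _"] image_mset_cong)

lemma iter_op_Suc:
  "n \<ge> 1 \<Longrightarrow> iter_op U f (Suc n) = U (iter_op U f n) (f (Suc n))"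
  by (simp add: iter_op_def)

lemma uninorm_fold_atLeastAtMost_Suc:
  assumes U: "uninorm U" "e \<in> {0..1}" and h: "h (Suc n) \<in> {0..1}"
  shows "uninorm_fold U e h {1..Suc n} = U (uninorm_fold U e h {1..n}) (h (Suc n))"
proof -
  have fold_in: "uninorm_fold U e h {1..n} \<in> {0..1}"
    by (rule uninorm_fold_closed[OF U])
  have "uninorm_fold U e h {1..Suc n} = clamped U (h (Suc n)) (uninorm_fold U e h {1..n})"
    using uninorm_fold_insert[OF U(1), of "{1..n}" "Suc n" e h] by (simp add: atLeastAtMostSuc_conv)
  also have "\<dots> = U (uninorm_fold U e h {1..n}) (h (Suc n))"
    using uninorm_commute[OF U(1) fold_in h] fold_in h by simp
  finally show ?thesis .
qed

lemma iter_op_eq_uninorm_fold: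
  assumes U: "uninorm U" and e: "e \<in> {0..1}" "\<And>a. a \<in> {0..1} \<Longrightarrow> U a e = a"
    and f: "\<And>i. i \<in> {1..n} \<Longrightarrow> f i \<in> {0..1}" and "n \<ge> 1"
  shows "iter_op U f n = uninorm_fold U e f {1..n}"
  using \<open>n \<ge> 1\<close> f
proof (induction n rule: nat_induct_at_least)
  case base
  then show ?case
    using uninorm_fold_insert[OF U, of "{}" 1 e f] e by (simp add: iter_op_def)
next
  case (Suc n)
  have "iter_op U f (Suc n) = U (uninorm_fold U e f {1..n}) (f (Suc n))"
    using Suc by (simp add: iter_op_Suc)
  also have "\<dots> = uninorm_fold U e f {1..Suc n}"
    by (rule uninorm_fold_atLeastAtMost_Suc[OF U e(1), symmetric]) (use Suc.prems in simp)
  finally show ?case .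
qed

definition compatible_preorder :: "(real \<Rightarrow> real \<Rightarrow> bool) \<Rightarrow> (real \<Rightarrow> real \<Rightarrow> real) \<Rightarrow> bool" where
  "compatible_preorder R U \<longleftrightarrow> reflp R \<and> transp R \<and>
     (\<forall>a\<in>{0..1}. \<forall>b\<in>{0..1}. \<forall>c\<in>{0..1}. R a b \<longrightarrow> R (U a c) (U b c))"

lemma compatible_preorder_le: "uninorm U \<Longrightarrow> compatible_preorder (\<le>) U"
  unfolding compatible_preorder_def by (auto intro: reflpI transpI uninorm_mono)

lemma compatible_preorder_conversep: "compatible_preorder R U \<Longrightarrow> compatible_preorder R\<inverse>\<inverse> U"
  unfolding compatible_preorder_def reflp_def transp_def by auto

lemma uninorm_fold_exchange:
  assumes U: "uninorm U" "e \<in> {0..1}" and R: "compatible_preorder R U"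
    and A: "finite A" "i \<in> A" "j \<in> A" "i \<noteq> j"
    and agree: "\<And>k. k \<in> A - {i, j} \<Longrightarrow> f k = g k"
    and unit: "f i \<in> {0..1}" "f j \<in> {0..1}" "g i \<in> {0..1}" "g j \<in> {0..1}"
    and swap: "R (U (f i) (f j)) (U (g i) (g j))"
  shows "R (uninorm_fold U e f A) (uninorm_fold U e g A)"
proof -
  define B where "B = A - {i, j}"
  have A_eq: "A = insert i (insert j B)" and B: "finite B" "i \<notin> B" "j \<notin> B"
    using A by (auto simp: B_def)
  have split: "uninorm_fold U e h A = U (U (h i) (h j)) (uninorm_fold U e h B)"
    if "h i \<in> {0..1}" "h j \<in> {0..1}" for h
  proof -
    have rest: "uninorm_fold U e h B \<in> {0..1}"
      by (rule uninorm_fold_closed[OF U])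
    have "uninorm_fold U e h A = U (h i) (U (h j) (uninorm_fold U e h B))"
      using that rest uninorm_closed[OF U(1) that(2) rest] A(4)
      by (simp add: A_eq B uninorm_fold_insert[OF U(1)])
    also have "\<dots> = U (U (h i) (h j)) (uninorm_fold U e h B)"
      using uninorm_assoc[OF U(1) that rest] by simp
    finally show ?thesis .
  qed
  have "uninorm_fold U e f B = uninorm_fold U e g B"
    using agree by (auto simp: B_def intro: uninorm_fold_cong)
  then show ?thesis
    using split[of f] split[of g] swap R uninorm_fold_closed[OF U] unit uninorm_closed[OF U(1)]
    unfolding compatible_preorder_def by metis
qed

lemma uninorm_fold_atLeastAtMost_Suc_mono:
  assumes U: "uninorm U" "e \<in> {0..1}" and R: "compatible_preorder R U"
    and le: "R (uninorm_fold U e f {1..n}) (uninorm_fold U e g {1..n})"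
    and last: "f (Suc n) = g (Suc n)" "g (Suc n) \<in> {0..1}"
  shows "R (uninorm_fold U e f {1..Suc n}) (uninorm_fold U e g {1..Suc n})"
proof -
  have "R (U (uninorm_fold U e f {1..n}) (g (Suc n))) (U (uninorm_fold U e g {1..n}) (g (Suc n)))"
    using R le uninorm_fold_closed[OF U] last(2) unfolding compatible_preorder_def by blast
  then show ?thesis
    using last uninorm_fold_atLeastAtMost_Suc[OF U] by metis
qed

definition monge_on ::
  "(real \<Rightarrow> real \<Rightarrow> bool) \<Rightarrow> (real \<Rightarrow> real \<Rightarrow> real) \<Rightarrow> (nat \<Rightarrow> nat \<Rightarrow> real) \<Rightarrow> nat set \<Rightarrow> bool"
  where "monge_on R U c A \<longleftrightarrow> (\<forall>k\<in>A. \<forall>l\<in>A. \<forall>i\<in>A. \<forall>j\<in>A. k \<le> l \<longrightarrow> i \<le> j \<longrightarrow>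
           R (U (c l i) (c k j)) (U (c k i) (c l j)))"

lemma monge_on_subset: "monge_on R U c A \<Longrightarrow> B \<subseteq> A \<Longrightarrow> monge_on R U c B"
  unfolding monge_on_def by blast

lemma monge_on_uninorm_fold_permutes:
  assumes U: "uninorm U" "e \<in> {0..1}" and R: "compatible_preorder R U"
    and c: "\<And>k i. k \<in> {1..n} \<Longrightarrow> i \<in> {1..n} \<Longrightarrow> c k i \<in> {0..1}"
    and monge: "monge_on R U c {1..n}" and \<sigma>: "\<sigma> permutes {1..n}"
  shows "R (uninorm_fold U e (\<lambda>k. c (\<sigma> k) k) {1..n}) (uninorm_fold U e (\<lambda>k. c k k) {1..n})"
  using c monge \<sigma>
proof (induction n arbitrary: \<sigma>)
  case 0
  then show ?case
    using R by (simp add: compatible_preorder_def reflp_def)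
next
  case (Suc n)
  have refl: "R a a" and trans: "R a b \<Longrightarrow> R b d \<Longrightarrow> R a d" for a b d
    using R unfolding compatible_preorder_def reflp_def transp_def by blast+
  define j where "j = inv \<sigma> (Suc n)"
  define \<sigma>' where "\<sigma>' = \<sigma> \<circ> transpose j (Suc n)"
  have j: "j \<in> {1..Suc n}" "\<sigma> j = Suc n"
    using permutes_in_image[OF permutes_inv[OF Suc.prems(3)]] permutes_inverses(1)[OF Suc.prems(3)]
    by (auto simp: j_def)
  have \<sigma>'_Suc: "\<sigma>' (Suc n) = Suc n"
    using j by (simp add: \<sigma>'_def)
  have "\<sigma>' permutes {1..Suc n}"
    unfolding \<sigma>'_def using j(1) by (intro permutes_compose Suc.prems(3) permutes_swap_id) auto
  then have \<sigma>': "\<sigma>' permutes {1..n}"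
    by (rule permutes_superset) (use \<sigma>'_Suc le_Suc_eq in auto)
  have swap: "R (uninorm_fold U e (\<lambda>k. c (\<sigma> k) k) {1..Suc n})
                (uninorm_fold U e (\<lambda>k. c (\<sigma>' k) k) {1..Suc n})"
  proof (cases "j = Suc n")
    case True
    then show ?thesis
      using refl by (simp add: \<sigma>'_def)
  next
    case False
    have \<sigma>_Suc: "\<sigma> (Suc n) \<in> {1..Suc n}"
      using permutes_in_image[OF Suc.prems(3)] by simp
    have "R (U (c (Suc n) j) (c (\<sigma> (Suc n)) (Suc n))) (U (c (\<sigma> (Suc n)) j) (c (Suc n) (Suc n)))"
      using Suc.prems(2) j(1) \<sigma>_Suc unfolding monge_on_def by auto
    then show ?thesis
      using False j \<sigma>_Suc Suc.prems(1)
      by (intro uninorm_fold_exchange[OF U R, of _ j "Suc n"]) (auto simp: \<sigma>'_def)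
  qed
  have IH: "R (uninorm_fold U e (\<lambda>k. c (\<sigma>' k) k) {1..n}) (uninorm_fold U e (\<lambda>k. c k k) {1..n})"
    using Suc.prems(1,2) \<sigma>' by (intro Suc.IH) (auto elim: monge_on_subset)
  then have "R (uninorm_fold U e (\<lambda>k. c (\<sigma>' k) k) {1..Suc n})
                (uninorm_fold U e (\<lambda>k. c k k) {1..Suc n})"
    using Suc.prems(1) \<sigma>'_Suc by (intro uninorm_fold_atLeastAtMost_Suc_mono[OF U R]) auto
  with swap show ?case
    by (rule trans)
qed

definition rearrangement_wrt ::
  "(real \<Rightarrow> real \<Rightarrow> bool) \<Rightarrow> (real \<Rightarrow> real \<Rightarrow> real) \<Rightarrow> (real \<Rightarrow> real \<Rightarrow> real) \<Rightarrow> bool" where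
  "rearrangement_wrt R U W \<longleftrightarrow>
    (\<forall>n::nat. \<forall>x y :: nat \<Rightarrow> real. \<forall>\<sigma>.
       n \<ge> 1 \<longrightarrow>
       (\<forall>i\<in>{1..n}. 0 \<le> x i \<and> x i \<le> 1 \<and> 0 \<le> y i \<and> y i \<le> 1) \<longrightarrow>
       (\<forall>i\<in>{1..n}. \<forall>j\<in>{1..n}. i \<le> j \<longrightarrow> x i \<le> x j \<and> y i \<le> y j) \<longrightarrow>
       \<sigma> permutes {1..n} \<longrightarrow>
       R (iter_op U (\<lambda>i. W (x (n + 1 - i)) (y i)) n) (iter_op U (\<lambda>i. W (x (\<sigma> i)) (y i)) n) \<and>
       R (iter_op U (\<lambda>i. W (x (\<sigma> i)) (y i)) n) (iter_op U (\<lambda>i. W (x i) (y i)) n))"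

definition two_term_rearrangement_wrt ::
  "(real \<Rightarrow> real \<Rightarrow> bool) \<Rightarrow> (real \<Rightarrow> real \<Rightarrow> real) \<Rightarrow> (real \<Rightarrow> real \<Rightarrow> real) \<Rightarrow> bool" where
  "two_term_rearrangement_wrt R U W \<longleftrightarrow>
    (\<forall>x1 x2 y1 y2 :: real. 0 \<le> x1 \<longrightarrow> x1 \<le> x2 \<longrightarrow> x2 \<le> 1 \<longrightarrow>
       0 \<le> y1 \<longrightarrow> y1 \<le> y2 \<longrightarrow> y2 \<le> 1 \<longrightarrow>
       R (U (W x1 y2) (W x2 y1)) (U (W x1 y1) (W x2 y2)))"

lemma two_term_rearrangement_wrtD:
  assumes "two_term_rearrangement_wrt R U W" "uninorm U" "uninorm W"
    and "0 \<le> a" "a \<le> b" "b \<le> 1" "0 \<le> c" "c \<le> d" "d \<le> 1"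
  shows "R (U (W b c) (W a d)) (U (W a c) (W b d))"
proof -
  have "a \<in> {0..1}" "b \<in> {0..1}" "c \<in> {0..1}" "d \<in> {0..1}"
    using assms(4-9) by auto
  then have "W b c \<in> {0..1}" "W a d \<in> {0..1}"
    using uninorm_closed[OF assms(3)] by blast+
  then show ?thesis
    using assms uninorm_commute[OF assms(2)] unfolding two_term_rearrangement_wrt_def by metis
qed

lemma two_term_rearrangement_wrt_necessary:
  assumes U: "uninorm U" and W: "uninorm W" and rearr: "rearrangement_wrt R U W"
  shows "two_term_rearrangement_wrt R U W"
  unfolding two_term_rearrangement_wrt_def
proof (intro allI impI)
  fix x1 x2 y1 y2 :: real
  assume bounds: "0 \<le> x1" "x1 \<le> x2" "x2 \<le> 1" "0 \<le> y1" "y1 \<le> y2" "y2 \<le> 1"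
  define x where "x k = (if k \<le> 1 then x1 else x2)" for k :: nat
  define y where "y k = (if k \<le> 1 then y1 else y2)" for k :: nat
  have "transpose 1 2 permutes {1..2::nat}"
    by (rule permutes_swap_id) auto
  then have "R (iter_op U (\<lambda>i. W (x (transpose 1 2 i)) (y i)) 2) (iter_op U (\<lambda>i. W (x i) (y i)) 2)"
    using rearr[unfolded rearrangement_wrt_def, rule_format, of 2 x y "transpose 1 2"] bounds
    unfolding x_def y_def by auto
  then have "R (U (W x2 y1) (W x1 y2)) (U (W x1 y1) (W x2 y2))"
    by (simp add: iter_op_def x_def y_def numeral_2_eq_2)
  moreover have "x1 \<in> {0..1}" "x2 \<in> {0..1}" "y1 \<in> {0..1}" "y2 \<in> {0..1}"
    using bounds by auto
  then have "W x2 y1 \<in> {0..1}" "W x1 y2 \<in> {0..1}"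
    using uninorm_closed[OF W] by blast+
  ultimately show "R (U (W x1 y2) (W x2 y1)) (U (W x1 y1) (W x2 y2))"
    using uninorm_commute[OF U] by metis
qed

definition reversal :: "nat \<Rightarrow> nat \<Rightarrow> nat" where
  "reversal n k = (if k \<in> {1..n} then n + 1 - k else k)"

lemma reversal_reversal [simp]: "reversal n (reversal n k) = k"
  by (auto simp: reversal_def)

lemma reversal_permutes: "reversal n permutes {1..n}"
  unfolding permutes_def by (metis reversal_def reversal_reversal)

lemma monge_on_sorted:
  assumes two: "two_term_rearrangement_wrt R U W" and U: "uninorm U" and W: "uninorm W"
    and bounds: "\<forall>i\<in>{1..n}. 0 \<le> x i \<and> x i \<le> 1 \<and> 0 \<le> y i \<and> y i \<le> 1"
    and sorted: "\<forall>i\<in>{1..n}. \<forall>j\<in>{1..n}. i \<le> j \<longrightarrow> x i \<le> x j \<and> y i \<le> y j"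
  shows "monge_on R U (\<lambda>k i. W (x k) (y i)) {1..n}"
  unfolding monge_on_def
  using bounds sorted by (auto intro!: two_term_rearrangement_wrtD[OF two U W])

lemma monge_on_reversed:
  assumes two: "two_term_rearrangement_wrt R U W" and U: "uninorm U" and W: "uninorm W"
    and bounds: "\<forall>i\<in>{1..n}. 0 \<le> x i \<and> x i \<le> 1 \<and> 0 \<le> y i \<and> y i \<le> 1"
    and sorted: "\<forall>i\<in>{1..n}. \<forall>j\<in>{1..n}. i \<le> j \<longrightarrow> x i \<le> x j \<and> y i \<le> y j"
  shows "monge_on R\<inverse>\<inverse> U (\<lambda>k i. W (x (reversal n k)) (y i)) {1..n}"
  unfolding monge_on_def conversep_iff
proof (intro ballI impI)
  fix k l i j
  assume "k \<in> {1..n}" "l \<in> {1..n}" "i \<in> {1..n}" "j \<in> {1..n}" "k \<le> l" "i \<le> j"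
  moreover from this have "reversal n k \<in> {1..n}" "reversal n l \<in> {1..n}"
    "reversal n l \<le> reversal n k"
    by (auto simp: reversal_def)
  ultimately show "R (U (W (x (reversal n k)) (y i)) (W (x (reversal n l)) (y j)))
                     (U (W (x (reversal n l)) (y i)) (W (x (reversal n k)) (y j)))"
    using bounds sorted by (intro two_term_rearrangement_wrtD[OF two U W]) auto
qed

lemma rearrangement_wrt_sufficient:
  assumes U: "uninorm U" and W: "uninorm W" and R: "compatible_preorder R U"
    and two: "two_term_rearrangement_wrt R U W"
  shows "rearrangement_wrt R U W"
  unfolding rearrangement_wrt_def
proof (intro allI impI)
  fix n :: nat and x y :: "nat \<Rightarrow> real" and \<sigma>
  assume n: "n \<ge> 1"
    and bounds: "\<forall>i\<in>{1..n}. 0 \<le> x i \<and> x i \<le> 1 \<and> 0 \<le> y i \<and> y i \<le> 1"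
    and sorted: "\<forall>i\<in>{1..n}. \<forall>j\<in>{1..n}. i \<le> j \<longrightarrow> x i \<le> x j \<and> y i \<le> y j"
    and \<sigma>: "\<sigma> permutes {1..n}"
  obtain e where e: "e \<in> {0..1}" "\<And>a. a \<in> {0..1} \<Longrightarrow> U a e = a"
    using uninorm_identity[OF U] by blast
  define c where "c = (\<lambda>k i. W (x k) (y i))"
  define c' where "c' = (\<lambda>k i. W (x (reversal n k)) (y i))"
  have c_unit: "c k i \<in> {0..1}" if "k \<in> {1..n}" "i \<in> {1..n}" for k i
    using that bounds uninorm_closed[OF W, of "x k" "y i"] by (simp add: c_def)
  have c'_unit: "c' k i \<in> {0..1}" if "k \<in> {1..n}" "i \<in> {1..n}" for k i
    using c_unit[OF _ that(2)] permutes_in_image[OF reversal_permutes] that(1)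
    by (simp add: c_def c'_def)
  have iter_op_eq: "iter_op U (\<lambda>i. W (x (p i)) (y i)) n = uninorm_fold U e (\<lambda>i. c (p i) i) {1..n}"
    if "\<And>i. i \<in> {1..n} \<Longrightarrow> p i \<in> {1..n}" for p
    using that c_unit unfolding c_def by (intro iter_op_eq_uninorm_fold[OF U e _ n]) auto
  have "monge_on R U c {1..n}"
    unfolding c_def by (rule monge_on_sorted[OF two U W bounds sorted])
  then have upper: "R (uninorm_fold U e (\<lambda>i. c (\<sigma> i) i) {1..n}) (uninorm_fold U e (\<lambda>i. c i i) {1..n})"
    by (intro monge_on_uninorm_fold_permutes[OF U(1) e(1) R c_unit _ \<sigma>])
  have "monge_on R\<inverse>\<inverse> U c' {1..n}"
    unfolding c'_def by (rule monge_on_reversed[OF two U W bounds sorted])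
  then have "R\<inverse>\<inverse> (uninorm_fold U e (\<lambda>i. c' ((reversal n \<circ> \<sigma>) i) i) {1..n})
                (uninorm_fold U e (\<lambda>i. c' i i) {1..n})"
    using permutes_compose[OF \<sigma> reversal_permutes]
    by (intro monge_on_uninorm_fold_permutes[OF U(1) e(1) compatible_preorder_conversep[OF R] c'_unit])
  moreover have "uninorm_fold U e (\<lambda>i. c' i i) {1..n} = uninorm_fold U e (\<lambda>i. c (n + 1 - i) i) {1..n}"
    by (rule uninorm_fold_cong) (simp add: c_def c'_def reversal_def)
  ultimately have lower: "R (uninorm_fold U e (\<lambda>i. c (n + 1 - i) i) {1..n})
                           (uninorm_fold U e (\<lambda>i. c (\<sigma> i) i) {1..n})"
    by (simp add: c_def c'_def)
  have "iter_op U (\<lambda>i. W (x (n + 1 - i)) (y i)) n = uninorm_fold U e (\<lambda>i. c (n + 1 - i) i) {1..n}"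
    by (rule iter_op_eq) auto
  moreover have "iter_op U (\<lambda>i. W (x (\<sigma> i)) (y i)) n = uninorm_fold U e (\<lambda>i. c (\<sigma> i) i) {1..n}"
    by (rule iter_op_eq) (use permutes_in_image[OF \<sigma>] in blast)
  moreover have "iter_op U (\<lambda>i. W (x i) (y i)) n = uninorm_fold U e (\<lambda>i. c i i) {1..n}"
    using iter_op_eq[of "\<lambda>i. i"] by simp
  ultimately show "R (iter_op U (\<lambda>i. W (x (n + 1 - i)) (y i)) n) (iter_op U (\<lambda>i. W (x (\<sigma> i)) (y i)) n) \<and>
        R (iter_op U (\<lambda>i. W (x (\<sigma> i)) (y i)) n) (iter_op U (\<lambda>i. W (x i) (y i)) n)"
    using upper lower by simp
qed

lemma rearrangement_wrt_iff_two_term: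
  assumes "uninorm U" "uninorm W" "compatible_preorder R U"
  shows "rearrangement_wrt R U W \<longleftrightarrow> two_term_rearrangement_wrt R U W"
  using assms rearrangement_wrt_sufficient two_term_rearrangement_wrt_necessary by blast

theorem theorem2:
  fixes T S :: "real \<Rightarrow> real \<Rightarrow> real"
  assumes "uninorm T" and "uninorm S"
  shows "(rearrangement_ineq T S \<longleftrightarrow>
            (\<forall>x1 x2 y1 y2 :: real. 0 \<le> x1 \<longrightarrow> x1 \<le> x2 \<longrightarrow> x2 \<le> 1 \<longrightarrow>
               0 \<le> y1 \<longrightarrow> y1 \<le> y2 \<longrightarrow> y2 \<le> 1 \<longrightarrow>
               S (T x1 y1) (T x2 y2) \<ge> S (T x1 y2) (T x2 y1)))
       \<and> (dual_rearrangement_ineq T S \<longleftrightarrow>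
            (\<forall>x1 x2 y1 y2 :: real. 0 \<le> x1 \<longrightarrow> x1 \<le> x2 \<longrightarrow> x2 \<le> 1 \<longrightarrow>
               0 \<le> y1 \<longrightarrow> y1 \<le> y2 \<longrightarrow> y2 \<le> 1 \<longrightarrow>
               T (S x1 y1) (S x2 y2) \<le> T (S x1 y2) (S x2 y1)))"
proof -
  have "rearrangement_wrt (\<le>) S T \<longleftrightarrow> two_term_rearrangement_wrt (\<le>) S T"
    using assms compatible_preorder_le by (intro rearrangement_wrt_iff_two_term)
  moreover have "rearrangement_wrt (\<le>)\<inverse>\<inverse> T S \<longleftrightarrow> two_term_rearrangement_wrt (\<le>)\<inverse>\<inverse> T S"
    using assms compatible_preorder_conversep[OF compatible_preorder_le]
    by (intro rearrangement_wrt_iff_two_term)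
  ultimately show ?thesis
    unfolding rearrangement_ineq_def dual_rearrangement_ineq_def rearrangement_wrt_def
      two_term_rearrangement_wrt_def
    by simp
qed

end
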